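(* In the setting below, $\operatorname{length}_{\mathcal{O}}\Phi_{\lambda_A}(A) = (n-t)\,w_{\mathbf{a}}$.
   Context: Let $\mathcal{O}$ be a discrete valuation ring with uniformiser $\varpi$ and normalised valuation $\nu$. Let $2\le m\le n$, $t=m-1$, $P=\mathcal{O}[X_{m\times n}]$ (polynomial ring in the entries of an $m\times n$ matrix of indeterminates $X$), and $A=P/\mathrm{I}_m(X)$, where $\mathrm{I}_k$ denotes the ideal of $k\times k$ minors. Fix integers $0\le a_1\le\cdots\le a_t$, $D=\operatorname{diag}(\varpi^{a_1},\ldots,\varpi^{a_t})$, $\Delta=\det D$. Let $\mathbf{a}\in\mathcal{O}^{m\times n}$ have zero last row and top $t$ entries of column $j$ equal to the $r$-th column of $D$, where $1\le r\le t$, $r\equiv j\pmod t$. Let $\lambda_A\colon A\to\mathcal{O}$ be the $\mathcal{O}$-algebra map induced by $X_{ij}\mapsto\mathbf{a}_{ij}$. For $\mathfrak{p}=\ker\lambda_A$, $\Phi_{\lambda_A}(A)=\operatorname{tors}(\mathfrak{p}/\mathfrak{p}^2)$. $w_{\mathbf{a}}=\nu(\Delta)=\operatorname{length}_{\mathcal{O}}(\mathcal{O}/\mathrm{I}_t(\mathbf{a}))$. *)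

theory Defs
  imports "HOL-Library.Poly_Mapping" "HOL-Library.Extended_Nat" "HOL-Combinatorics.Permutations"
begin

definition is_dvr_uniformiser :: "'a::idom \<Rightarrow> bool" where
  "is_dvr_uniformiser uf \<longleftrightarrow> uf \<noteq> 0 \<and> \<not> uf dvd 1 \<and>
     (\<forall>x. x \<noteq> 0 \<longrightarrow> (\<exists>u k. u dvd 1 \<and> x = u * uf ^ k))"

text \<open>Polynomials in variables indexed by pairs (i,j) (0-based row/column) over 'a.\<close>
type_synonym 'a mpoly = "((nat \<times> nat) \<Rightarrow>\<^sub>0 nat) \<Rightarrow>\<^sub>0 'a"

definition Var :: "nat \<Rightarrow> nat \<Rightarrow> 'a::comm_ring_1 mpoly" where
  "Var i j = Poly_Mapping.single (Poly_Mapping.single (i, j) 1) 1"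

definition Const :: "'a::comm_ring_1 \<Rightarrow> 'a mpoly" where
  "Const c = Poly_Mapping.single 0 c"

definition eval_mpoly :: "(nat \<Rightarrow> nat \<Rightarrow> 'a::comm_ring_1) \<Rightarrow> 'a mpoly \<Rightarrow> 'a" where
  "eval_mpoly a f = (\<Sum>mo\<in>Poly_Mapping.keys f. Poly_Mapping.lookup f mo *
      (\<Prod>v\<in>Poly_Mapping.keys mo. a (fst v) (snd v) ^ Poly_Mapping.lookup mo v))"

text \<open>The polynomial ring P = O[X_{m x n}] as a subset (only variables with i<m, j<n).\<close>
definition poly_ring :: "nat \<Rightarrow> nat \<Rightarrow> 'a::comm_ring_1 mpoly set" where
  "poly_ring m n = {f. \<forall>mo\<in>Poly_Mapping.keys f. Poly_Mapping.keys mo \<subseteq> {..<m} \<times> {..<n}}"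

definition minor :: "nat \<Rightarrow> (nat \<Rightarrow> nat) \<Rightarrow> (nat \<Rightarrow> nat) \<Rightarrow> 'a::comm_ring_1 mpoly" where
  "minor k rs cs = (\<Sum>p\<in>{p. p permutes {..<k}}.
      of_int (sign p) * (\<Prod>i<k. Var (rs i) (cs (p i))))"

definition minors :: "nat \<Rightarrow> nat \<Rightarrow> nat \<Rightarrow> 'a::comm_ring_1 mpoly set" where
  "minors m n k = {minor k rs cs | rs cs.
      strict_mono_on {..<k} rs \<and> rs ` {..<k} \<subseteq> {..<m} \<and>
      strict_mono_on {..<k} cs \<and> cs ` {..<k} \<subseteq> {..<n}}"

definition gen_ideal :: "'a::comm_ring_1 set \<Rightarrow> 'a set \<Rightarrow> 'a set" where
  "gen_ideal R S = {x. \<exists>F c. finite F \<and> F \<subseteq> S \<and> (\<forall>s\<in>F. c s \<in> R) \<and> x = (\<Sum>s\<in>F. c s * s)}"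

text \<open>The matrix a (0-based): rows i < t = m-1, column j has the (j mod t)-th column of D.\<close>
definition amat :: "'a::comm_ring_1 \<Rightarrow> nat \<Rightarrow> (nat \<Rightarrow> nat) \<Rightarrow> nat \<Rightarrow> nat \<Rightarrow> 'a" where
  "amat uf m as i j = (if i < m - 1 \<and> i = j mod (m - 1) then uf ^ as i else 0)"

text \<open>Q = ker(lambda_P) \<subseteq> P; then p = Q / I_m, p^2 = (Q^2 + I_m)/I_m and
  p/p^2 = Q/(Q^2 + I_m).\<close>
definition kerQ :: "nat \<Rightarrow> nat \<Rightarrow> (nat \<Rightarrow> nat \<Rightarrow> 'a::comm_ring_1) \<Rightarrow> 'a mpoly set" where
  "kerQ m n a = {f \<in> poly_ring m n. eval_mpoly a f = 0}"

definition denomN :: "nat \<Rightarrow> nat \<Rightarrow> (nat \<Rightarrow> nat \<Rightarrow> 'a::comm_ring_1) \<Rightarrow> 'a mpoly set" where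
  "denomN m n a = gen_ideal (poly_ring m n)
     ({f * g | f g. f \<in> kerQ m n a \<and> g \<in> kerQ m n a} \<union> minors m n m)"

text \<open>Preimage in Q of the O-torsion of Q/N.\<close>
definition torsT :: "nat \<Rightarrow> nat \<Rightarrow> (nat \<Rightarrow> nat \<Rightarrow> 'a::comm_ring_1) \<Rightarrow> 'a mpoly set" where
  "torsT m n a = {x \<in> kerQ m n a. \<exists>c. c \<noteq> 0 \<and> Const c * x \<in> denomN m n a}"

text \<open>O-submodules L with N \<subseteq> L \<subseteq> T (i.e. submodules of T/N).\<close>
definition between_submod :: "'a::comm_ring_1 mpoly set \<Rightarrow> 'a mpoly set \<Rightarrow> 'a mpoly set \<Rightarrow> bool" where
  "between_submod N T L \<longleftrightarrow> N \<subseteq> L \<and> L \<subseteq> T \<and>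
     (\<forall>x\<in>L. \<forall>y\<in>L. x + y \<in> L) \<and> (\<forall>c. \<forall>x\<in>L. Const c * x \<in> L)"

definition quot_length :: "'a::comm_ring_1 mpoly set \<Rightarrow> 'a mpoly set \<Rightarrow> enat" where
  "quot_length N T = Sup {enat k | k. \<exists>L. (\<forall>i\<le>k. between_submod N T (L i)) \<and>
      L 0 = N \<and> L k = T \<and> (\<forall>i<k. L i \<subset> L (Suc i))}"

end

theory Submission
  imports Defs "Jordan_Normal_Form.Determinant"
begin

text \<open>An element of the kernel Q of evaluation at a is determined modulo \<open>Q\<^sup>2\<close> by its gradient
  at a (first-order Taylor expansion). The gradient at a of an m-minor vanishes outside the
  last row, where it is \<open>\<Delta>\<close> times a cofactor vector lying in the kernel K of a, and these
  vectors span \<open>\<Delta>K\<close>. Hence \<open>N = Q\<^sup>2 + I\<^sub>m\<close> consists of the elements of Q whose gradient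
  vanishes in the first t rows and has last row in \<open>\<Delta>K\<close>, while the torsion T allows any last
  row in K. Since K is free on its last n - t coordinates, \<open>T/N \<cong> K/\<Delta>K \<cong> (O/\<Delta>)\<^sup>n\<^sup>-\<^sup>t\<close>,
  of length \<open>(n - t) \<nu>(\<Delta>)\<close>.\<close>

subsection \<open>Substituting univariate polynomials and partial derivatives at a point\<close>

definition subst_monom :: "((nat \<times> nat) \<Rightarrow> 'a::comm_ring_1 poly) \<Rightarrow> ((nat \<times> nat) \<Rightarrow>\<^sub>0 nat) \<Rightarrow> 'a poly" where
  "subst_monom X mo = (\<Prod>v\<in>Poly_Mapping.keys mo. X v ^ Poly_Mapping.lookup mo v)"

definition subst_upoly :: "((nat \<times> nat) \<Rightarrow> 'a::comm_ring_1 poly) \<Rightarrow> 'a mpoly \<Rightarrow> 'a poly" where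
  "subst_upoly X f = (\<Sum>mo\<in>Poly_Mapping.keys f. [:Poly_Mapping.lookup f mo:] * subst_monom X mo)"

lemma subst_monom_superset:
  assumes "finite S" "Poly_Mapping.keys mo \<subseteq> S"
  shows "subst_monom X mo = (\<Prod>v\<in>S. X v ^ Poly_Mapping.lookup mo v)"
  unfolding subst_monom_def
  by (rule prod.mono_neutral_left) (use assms in \<open>auto simp: in_keys_iff\<close>)

lemma subst_monom_add: "subst_monom X (k + l) = subst_monom X k * subst_monom X l"
proof -
  let ?S = "Poly_Mapping.keys k \<union> Poly_Mapping.keys l"
  have "subst_monom X (k + l) = (\<Prod>v\<in>?S. X v ^ Poly_Mapping.lookup (k + l) v)"
    by (rule subst_monom_superset) (auto dest: subsetD[OF keys_add])
  also have "\<dots> = (\<Prod>v\<in>?S. X v ^ Poly_Mapping.lookup k v * X v ^ Poly_Mapping.lookup l v)"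
    by (simp add: lookup_add power_add)
  also have "\<dots> = subst_monom X k * subst_monom X l"
    by (simp add: prod.distrib subst_monom_superset[of ?S])
  finally show ?thesis .
qed

lemma subst_monom_zero [simp]: "subst_monom X 0 = 1"
  by (simp add: subst_monom_def)

lemma subst_upoly_superset:
  assumes "finite S" "Poly_Mapping.keys f \<subseteq> S"
  shows "subst_upoly X f = (\<Sum>mo\<in>S. [:Poly_Mapping.lookup f mo:] * subst_monom X mo)"
  unfolding subst_upoly_def
  by (rule sum.mono_neutral_left) (use assms in \<open>auto simp: in_keys_iff\<close>)

lemma subst_upoly_add: "subst_upoly X (f + g) = subst_upoly X f + subst_upoly X g"
proof -
  let ?S = "Poly_Mapping.keys f \<union> Poly_Mapping.keys g"
  have "subst_upoly X (f + g) = (\<Sum>mo\<in>?S. [:Poly_Mapping.lookup (f + g) mo:] * subst_monom X mo)"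
    by (rule subst_upoly_superset) (auto dest: subsetD[OF keys_add])
  also have "\<dots> = (\<Sum>mo\<in>?S. [:Poly_Mapping.lookup f mo:] * subst_monom X mo
                        + [:Poly_Mapping.lookup g mo:] * subst_monom X mo)"
    by (simp add: lookup_add distrib_right smult_add_left)
  also have "\<dots> = subst_upoly X f + subst_upoly X g"
    by (simp add: sum.distrib subst_upoly_superset[of ?S])
  finally show ?thesis .
qed

lemma subst_upoly_zero [simp]: "subst_upoly X 0 = 0"
  by (simp add: subst_upoly_def)

lemma subst_upoly_uminus: "subst_upoly X (- f) = - subst_upoly X f"
  by (metis subst_upoly_add subst_upoly_zero add_eq_0_iff2 neg_eq_iff_add_eq_0)

lemma subst_upoly_diff: "subst_upoly X (f - g) = subst_upoly X f - subst_upoly X g"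
  by (metis subst_upoly_add subst_upoly_uminus diff_conv_add_uminus)

lemma subst_upoly_sum: "subst_upoly X (sum g A) = (\<Sum>x\<in>A. subst_upoly X (g x))"
  by (induction A rule: infinite_finite_induct) (auto simp: subst_upoly_add)

lemma subst_upoly_single: "subst_upoly X (Poly_Mapping.single mo c) = [:c:] * subst_monom X mo"
  by (simp add: subst_upoly_def)

lemma mpoly_eq_sum_single:
  "f = (\<Sum>k\<in>Poly_Mapping.keys f. Poly_Mapping.single k (Poly_Mapping.lookup f k))"
  by (rule poly_mapping_eqI) (simp add: lookup_sum lookup_single when_def in_keys_iff)

lemma subst_upoly_mult: "subst_upoly X (f * g) = subst_upoly X f * subst_upoly X g"
proof -
  let ?sf = "\<lambda>k. Poly_Mapping.single k (Poly_Mapping.lookup f k)"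
  let ?sg = "\<lambda>l. Poly_Mapping.single l (Poly_Mapping.lookup g l)"
  have single_mult: "subst_upoly X (?sf k * ?sg l) = subst_upoly X (?sf k) * subst_upoly X (?sg l)" for k l
    by (simp add: mult_single subst_upoly_single subst_monom_add algebra_simps)
  have "f * g = (\<Sum>k\<in>Poly_Mapping.keys f. \<Sum>l\<in>Poly_Mapping.keys g. ?sf k * ?sg l)"
    by (subst (1) mpoly_eq_sum_single[of f], subst (1) mpoly_eq_sum_single[of g])
       (simp add: sum_product)
  then show ?thesis
    by (subst (2) mpoly_eq_sum_single[of f], subst (2) mpoly_eq_sum_single[of g])
       (simp add: subst_upoly_sum single_mult sum_product)
qed

lemma subst_upoly_prod: "subst_upoly X (prod g A) = (\<Prod>x\<in>A. subst_upoly X (g x))"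
  by (induction A rule: infinite_finite_induct)
     (auto simp: subst_upoly_mult subst_upoly_single simp flip: single_one)

lemma subst_upoly_Const [simp]: "subst_upoly X (Const c) = [:c:]"
  by (simp add: Const_def subst_upoly_single subst_monom_def)

lemma subst_upoly_Var [simp]: "subst_upoly X (Var i j) = X (i, j)"
  by (simp add: Var_def subst_upoly_single subst_monom_def)

lemma Const_zero [simp]: "Const 0 = 0"
  by (simp add: Const_def)

lemma Const_one [simp]: "Const 1 = 1"
  by (simp add: Const_def)

lemma Const_add: "Const (x + y) = Const x + Const y"
  by (simp add: Const_def single_add)

lemma Const_mult: "Const (x * y) = Const x * Const y"
  by (simp add: Const_def mult_single)

lemma Const_uminus: "Const (- x) = - Const x"
  by (simp add: Const_def single_uminus)

lemma of_int_mpoly: "(of_int z :: 'a::comm_ring_1 mpoly) = Const (of_int z)"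
  by (simp add: Const_def)

lemma eval_mpoly_subst_upoly:
  assumes "\<And>v. poly (X v) 0 = a (fst v) (snd v)"
  shows "eval_mpoly a f = poly (subst_upoly X f) 0"
  unfolding eval_mpoly_def subst_upoly_def subst_monom_def
  by (simp add: poly_sum poly_prod poly_power assms)

lemmas eval_mpoly_const_subst = eval_mpoly_subst_upoly[of "\<lambda>v. [:a (fst v) (snd v):]" a for a, simplified]

lemma eval_mpoly_add: "eval_mpoly a (f + g) = eval_mpoly a f + eval_mpoly a g"
  by (simp add: eval_mpoly_const_subst subst_upoly_add)

lemma eval_mpoly_diff: "eval_mpoly a (f - g) = eval_mpoly a f - eval_mpoly a g"
  by (simp add: eval_mpoly_const_subst subst_upoly_diff)

lemma eval_mpoly_mult: "eval_mpoly a (f * g) = eval_mpoly a f * eval_mpoly a g"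
  by (simp add: eval_mpoly_const_subst subst_upoly_mult)

lemma eval_mpoly_sum: "eval_mpoly a (sum g A) = (\<Sum>x\<in>A. eval_mpoly a (g x))"
  by (simp add: eval_mpoly_const_subst subst_upoly_sum poly_sum)

lemma eval_mpoly_prod: "eval_mpoly a (prod g A) = (\<Prod>x\<in>A. eval_mpoly a (g x))"
  by (simp add: eval_mpoly_const_subst subst_upoly_prod poly_prod)

lemma eval_mpoly_Const [simp]: "eval_mpoly a (Const c) = c"
  by (simp add: eval_mpoly_const_subst)

lemma eval_mpoly_Var [simp]: "eval_mpoly a (Var i j) = a i j"
  by (simp add: eval_mpoly_const_subst)

lemma eval_mpoly_zero [simp]: "eval_mpoly a 0 = 0"
  by (simp add: eval_mpoly_const_subst)

lemma eval_mpoly_of_int [simp]: "eval_mpoly a (of_int z) = of_int z"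
  by (simp add: of_int_mpoly)

text \<open>Computed with the dual numbers \<open>a\<^sub>v + \<epsilon> [v = w]\<close>, so that the Leibniz rule follows from
  multiplicativity of substitution.\<close>
definition pderiv_at :: "(nat \<Rightarrow> nat \<Rightarrow> 'a::comm_ring_1) \<Rightarrow> nat \<times> nat \<Rightarrow> 'a mpoly \<Rightarrow> 'a" where
  "pderiv_at a w f = coeff (subst_upoly (\<lambda>v. [:a (fst v) (snd v), of_bool (v = w):]) f) 1"

lemma eval_mpoly_dual_subst:
  "eval_mpoly a f = coeff (subst_upoly (\<lambda>v. [:a (fst v) (snd v), of_bool (v = w):]) f) 0"
  by (subst eval_mpoly_subst_upoly) (auto simp: poly_0_coeff_0)

lemma pderiv_at_add: "pderiv_at a w (f + g) = pderiv_at a w f + pderiv_at a w g"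
  by (simp add: pderiv_at_def subst_upoly_add)

lemma pderiv_at_diff: "pderiv_at a w (f - g) = pderiv_at a w f - pderiv_at a w g"
  by (simp add: pderiv_at_def subst_upoly_diff)

lemma pderiv_at_sum: "pderiv_at a w (sum g A) = (\<Sum>x\<in>A. pderiv_at a w (g x))"
  by (simp add: pderiv_at_def subst_upoly_sum coeff_sum)

lemma pderiv_at_mult:
  "pderiv_at a w (f * g) = eval_mpoly a f * pderiv_at a w g + eval_mpoly a g * pderiv_at a w f"
  by (simp add: pderiv_at_def subst_upoly_mult coeff_mult atMost_Suc
      eval_mpoly_dual_subst[of a _ w] algebra_simps)

lemma pderiv_at_Const [simp]: "pderiv_at a w (Const c) = 0"
  by (simp add: pderiv_at_def)

lemma pderiv_at_zero [simp]: "pderiv_at a w 0 = 0"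
  by (simp add: pderiv_at_def)

lemma pderiv_at_Var: "pderiv_at a w (Var i j) = of_bool ((i, j) = w)"
  by (simp add: pderiv_at_def)

lemma pderiv_at_Const_mult: "pderiv_at a w (Const c * f) = c * pderiv_at a w f"
  by (simp add: pderiv_at_mult)

lemma pderiv_at_of_int_mult: "pderiv_at a w (of_int z * f) = of_int z * pderiv_at a w f"
  by (simp add: of_int_mpoly pderiv_at_Const_mult)

subsection \<open>The polynomial ring and its ideals\<close>

lemma poly_ring_Const: "Const c \<in> poly_ring m n"
  by (simp add: poly_ring_def Const_def)

lemma poly_ring_zero: "0 \<in> poly_ring m n"
  by (simp add: poly_ring_def)

lemma poly_ring_one: "1 \<in> poly_ring m n"
  by (simp add: poly_ring_def)

lemma poly_ring_Var: "i < m \<Longrightarrow> j < n \<Longrightarrow> Var i j \<in> poly_ring m n"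
  by (simp add: poly_ring_def Var_def)

lemma poly_ring_add: "f \<in> poly_ring m n \<Longrightarrow> g \<in> poly_ring m n \<Longrightarrow> f + g \<in> poly_ring m n"
  unfolding poly_ring_def using keys_add[of f g] by fastforce

lemma poly_ring_uminus: "f \<in> poly_ring m n \<Longrightarrow> - f \<in> poly_ring m n"
  by (simp add: poly_ring_def)

lemma poly_ring_diff: "f \<in> poly_ring m n \<Longrightarrow> g \<in> poly_ring m n \<Longrightarrow> f - g \<in> poly_ring m n"
  by (metis poly_ring_add poly_ring_uminus diff_conv_add_uminus)

lemma poly_ring_mult:
  assumes "f \<in> poly_ring m n" "g \<in> poly_ring m n"
  shows "f * g \<in> poly_ring m n"
  unfolding poly_ring_def
proof (intro CollectI ballI)
  fix mo assume "mo \<in> Poly_Mapping.keys (f * g)"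
  then obtain k l where "mo = k + l" "k \<in> Poly_Mapping.keys f" "l \<in> Poly_Mapping.keys g"
    using keys_mult by blast
  with assms keys_add[of k l] show "Poly_Mapping.keys mo \<subseteq> {..<m} \<times> {..<n}"
    unfolding poly_ring_def by fastforce
qed

lemma poly_ring_sum: "(\<And>x. x \<in> A \<Longrightarrow> g x \<in> poly_ring m n) \<Longrightarrow> sum g A \<in> poly_ring m n"
  by (induction A rule: infinite_finite_induct) (auto simp: poly_ring_zero poly_ring_add)

lemma poly_ring_prod: "(\<And>x. x \<in> A \<Longrightarrow> g x \<in> poly_ring m n) \<Longrightarrow> prod g A \<in> poly_ring m n"
  by (induction A rule: infinite_finite_induct) (auto simp: poly_ring_one poly_ring_mult)

lemma poly_ring_of_int: "of_int z \<in> poly_ring m n"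
  by (simp add: of_int_mpoly poly_ring_Const)

lemma Var_power: "Var i j ^ k = Poly_Mapping.single (Poly_Mapping.single (i, j) k) 1"
  by (induction k) (simp_all add: Var_def mult_single single_add[symmetric] add.commute)

lemma single_eq_Const_mult_Vars:
  "Poly_Mapping.single mo c =
     Const c * (\<Prod>v\<in>Poly_Mapping.keys mo. Var (fst v) (snd v) ^ Poly_Mapping.lookup mo v)"
proof -
  have "(\<Prod>v\<in>A. Var (fst v) (snd v) ^ Poly_Mapping.lookup mo v) =
        Poly_Mapping.single (\<Sum>v\<in>A. Poly_Mapping.single v (Poly_Mapping.lookup mo v)) (1::'a)"
    if "finite A" for A
    using that by induction (auto simp: Var_power mult_single add.commute)
  from this[of "Poly_Mapping.keys mo"] show ?thesis
    by (simp add: Const_def mult_single flip: mpoly_eq_sum_single)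
qed

lemma poly_ring_induct [consumes 1, case_names Const Var add mult]:
  assumes "f \<in> poly_ring m n"
    and Const: "\<And>c. P (Const c)"
    and Var: "\<And>i j. i < m \<Longrightarrow> j < n \<Longrightarrow> P (Var i j)"
    and add: "\<And>f g. P f \<Longrightarrow> P g \<Longrightarrow> P (f + g)"
    and mult: "\<And>f g. P f \<Longrightarrow> P g \<Longrightarrow> P (f * g)"
  shows "P f"
proof -
  have sum: "P (sum g A)" if "\<And>x. x \<in> A \<Longrightarrow> P (g x)" for g and A :: "'b set"
    using that by (induction A rule: infinite_finite_induct) (auto intro: add Const[of 0, unfolded Const_zero])
  have prod: "P (prod g A)" if "\<And>x. x \<in> A \<Longrightarrow> P (g x)" for g and A :: "'b set"
    using that by (induction A rule: infinite_finite_induct)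
      (auto intro: mult Const[of 1, unfolded Const_one])
  have power: "P (g ^ k)" if "P g" for g k
    using that by (induction k) (auto intro: mult Const[of 1, unfolded Const_one])
  have "P (Poly_Mapping.single mo c)" if "mo \<in> Poly_Mapping.keys f" for mo c
  proof -
    have "Poly_Mapping.keys mo \<subseteq> {..<m} \<times> {..<n}"
      using that assms(1) by (auto simp: poly_ring_def)
    then have "P (\<Prod>v\<in>Poly_Mapping.keys mo. Var (fst v) (snd v) ^ Poly_Mapping.lookup mo v)"
      by (intro prod power Var) auto
    then show ?thesis
      unfolding single_eq_Const_mult_Vars by (rule mult[OF Const])
  qed
  then show ?thesis
    by (subst mpoly_eq_sum_single) (auto intro: sum)
qed

lemma gen_ideal_zero: "0 \<in> gen_ideal R S"
  unfolding gen_ideal_def by (rule CollectI, rule exI[of _ "{}"]) auto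

lemma gen_ideal_generator: "s \<in> S \<Longrightarrow> r \<in> R \<Longrightarrow> r * s \<in> gen_ideal R S"
  unfolding gen_ideal_def by (rule CollectI, rule exI[of _ "{s}"], rule exI[of _ "\<lambda>_. r"]) auto

lemma gen_ideal_mono: "S \<subseteq> S' \<Longrightarrow> gen_ideal R S \<subseteq> gen_ideal R S'"
  unfolding gen_ideal_def by (smt (verit) Collect_mono order_trans)

lemma gen_ideal_induct [consumes 1, case_names zero add generator]:
  assumes "x \<in> gen_ideal R S"
    and "P 0" and "\<And>u v. P u \<Longrightarrow> P v \<Longrightarrow> P (u + v)"
    and "\<And>c s. c \<in> R \<Longrightarrow> s \<in> S \<Longrightarrow> P (c * s)"
  shows "P x"
proof -
  obtain F c where F: "finite F" "F \<subseteq> S" "\<forall>s\<in>F. c s \<in> R" and x: "x = (\<Sum>s\<in>F. c s * s)"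
    using assms(1) unfolding gen_ideal_def by blast
  from F have "P (\<Sum>s\<in>F. c s * s)"
    by (induction F rule: finite_induct) (auto intro: assms(2-4))
  then show ?thesis by (simp add: x)
qed

lemma gen_ideal_add:
  assumes "x \<in> gen_ideal R S" "y \<in> gen_ideal R S"
    and "0 \<in> R" "\<And>u v. u \<in> R \<Longrightarrow> v \<in> R \<Longrightarrow> u + v \<in> R"
  shows "x + y \<in> gen_ideal R S"
proof -
  obtain F1 c1 where 1: "finite F1" "F1 \<subseteq> S" "\<forall>s\<in>F1. c1 s \<in> R" "x = (\<Sum>s\<in>F1. c1 s * s)"
    using assms(1) unfolding gen_ideal_def by blast
  obtain F2 c2 where 2: "finite F2" "F2 \<subseteq> S" "\<forall>s\<in>F2. c2 s \<in> R" "y = (\<Sum>s\<in>F2. c2 s * s)"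
    using assms(2) unfolding gen_ideal_def by blast
  define c where "c s = (if s \<in> F1 then c1 s else 0) + (if s \<in> F2 then c2 s else 0)" for s
  have "x + y = (\<Sum>s\<in>F1 \<union> F2. c s * s)"
    unfolding 1(4) 2(4) c_def distrib_right sum.distrib if_distrib[of "\<lambda>z. z * _"]
    by (simp add: sum.If_cases 1(1) 2(1) Int_absorb1)
  moreover have "\<forall>s\<in>F1 \<union> F2. c s \<in> R"
    using 1 2 assms(3,4) by (auto simp: c_def)
  ultimately show ?thesis
    unfolding gen_ideal_def by (intro CollectI exI[of _ "F1 \<union> F2"] exI[of _ c]) (use 1 2 in auto)
qed

lemma gen_ideal_mult:
  assumes "x \<in> gen_ideal R S" "r \<in> R" "\<And>u v. u \<in> R \<Longrightarrow> v \<in> R \<Longrightarrow> u * v \<in> R"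
  shows "r * x \<in> gen_ideal R S"
proof -
  obtain F c where F: "finite F" "F \<subseteq> S" "\<forall>s\<in>F. c s \<in> R" and x: "x = (\<Sum>s\<in>F. c s * s)"
    using assms(1) unfolding gen_ideal_def by blast
  have "r * x = (\<Sum>s\<in>F. (r * c s) * s)"
    by (simp add: x sum_distrib_left mult.assoc)
  then show ?thesis
    unfolding gen_ideal_def
    by (intro CollectI exI[of _ F] exI[of _ "\<lambda>s. r * c s"]) (use F assms(2,3) in auto)
qed

lemma gen_ideal_poly_ring_add:
  "x \<in> gen_ideal (poly_ring m n) S \<Longrightarrow> y \<in> gen_ideal (poly_ring m n) S \<Longrightarrow>
     x + y \<in> gen_ideal (poly_ring m n) S"
  by (rule gen_ideal_add) (auto simp: poly_ring_zero poly_ring_add)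

lemma gen_ideal_poly_ring_mult:
  "x \<in> gen_ideal (poly_ring m n) S \<Longrightarrow> r \<in> poly_ring m n \<Longrightarrow> r * x \<in> gen_ideal (poly_ring m n) S"
  by (rule gen_ideal_mult) (auto simp: poly_ring_mult)

lemma gen_ideal_poly_ring_sum:
  "(\<And>x. x \<in> A \<Longrightarrow> g x \<in> gen_ideal (poly_ring m n) S) \<Longrightarrow> sum g A \<in> gen_ideal (poly_ring m n) S"
  by (induction A rule: infinite_finite_induct) (auto simp: gen_ideal_zero gen_ideal_poly_ring_add)

lemma kerQ_add: "x \<in> kerQ m n a \<Longrightarrow> y \<in> kerQ m n a \<Longrightarrow> x + y \<in> kerQ m n a"
  by (simp add: kerQ_def poly_ring_add eval_mpoly_add)

lemma kerQ_diff: "x \<in> kerQ m n a \<Longrightarrow> y \<in> kerQ m n a \<Longrightarrow> x - y \<in> kerQ m n a"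
  by (simp add: kerQ_def poly_ring_diff eval_mpoly_diff)

lemma kerQ_mult: "x \<in> kerQ m n a \<Longrightarrow> r \<in> poly_ring m n \<Longrightarrow> r * x \<in> kerQ m n a"
  by (simp add: kerQ_def poly_ring_mult eval_mpoly_mult)

lemma kerQ_Const_mult: "x \<in> kerQ m n a \<Longrightarrow> Const c * x \<in> kerQ m n a"
  by (simp add: kerQ_mult poly_ring_Const)

subsection \<open>Taylor expansion to first order\<close>

definition kerQ_sq :: "nat \<Rightarrow> nat \<Rightarrow> (nat \<Rightarrow> nat \<Rightarrow> 'a::comm_ring_1) \<Rightarrow> 'a mpoly set" where
  "kerQ_sq m n a = gen_ideal (poly_ring m n) {f * g | f g. f \<in> kerQ m n a \<and> g \<in> kerQ m n a}"

definition lin_part :: "nat \<Rightarrow> nat \<Rightarrow> (nat \<Rightarrow> nat \<Rightarrow> 'a::comm_ring_1) \<Rightarrow> 'a mpoly \<Rightarrow> 'a mpoly" where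
  "lin_part m n a f = (\<Sum>v\<in>{..<m} \<times> {..<n}.
      Const (pderiv_at a v f) * (Var (fst v) (snd v) - Const (a (fst v) (snd v))))"

lemma lin_part_kerQ: "lin_part m n a f \<in> kerQ m n a"
  unfolding lin_part_def kerQ_def
  by (auto intro!: poly_ring_sum poly_ring_mult poly_ring_Const poly_ring_diff poly_ring_Var
      simp: eval_mpoly_sum eval_mpoly_mult eval_mpoly_diff)

lemma lin_part_add: "lin_part m n a (f + g) = lin_part m n a f + lin_part m n a g"
  unfolding lin_part_def by (simp add: pderiv_at_add Const_add distrib_right sum.distrib)

lemma lin_part_mult:
  "lin_part m n a (f * g) =
     Const (eval_mpoly a f) * lin_part m n a g + Const (eval_mpoly a g) * lin_part m n a f"
  unfolding lin_part_def
  by (simp add: pderiv_at_mult Const_add Const_mult distrib_right sum.distrib sum_distrib_left mult.assoc)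

lemma lin_part_Const [simp]: "lin_part m n a (Const c) = 0"
  by (simp add: lin_part_def)

lemma lin_part_Var:
  assumes "i < m" "j < n"
  shows "lin_part m n a (Var i j) = Var i j - Const (a i j)"
proof -
  have "lin_part m n a (Var i j) = (\<Sum>v\<in>{..<m} \<times> {..<n}.
      if v = (i, j) then Var (fst v) (snd v) - Const (a (fst v) (snd v)) else 0)"
    unfolding lin_part_def pderiv_at_Var by (rule sum.cong) auto
  with assms show ?thesis
    by (simp add: sum.delta)
qed

lemma kerQ_sq_zero: "0 \<in> kerQ_sq m n a"
  unfolding kerQ_sq_def by (rule gen_ideal_zero)

lemma kerQ_sq_add: "x \<in> kerQ_sq m n a \<Longrightarrow> y \<in> kerQ_sq m n a \<Longrightarrow> x + y \<in> kerQ_sq m n a"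
  unfolding kerQ_sq_def by (rule gen_ideal_poly_ring_add)

lemma kerQ_sq_mult: "x \<in> kerQ_sq m n a \<Longrightarrow> r \<in> poly_ring m n \<Longrightarrow> r * x \<in> kerQ_sq m n a"
  unfolding kerQ_sq_def by (rule gen_ideal_poly_ring_mult)

lemma kerQ_sq_product:
  assumes "f \<in> kerQ m n a" "g \<in> kerQ m n a"
  shows "f * g \<in> kerQ_sq m n a"
proof -
  have "f * g \<in> {f * g | f g. f \<in> kerQ m n a \<and> g \<in> kerQ m n a}"
    using assms by blast
  from gen_ideal_generator[OF this poly_ring_one] show ?thesis
    by (simp add: kerQ_sq_def)
qed

lemma kerQ_sq_pderiv_at:
  assumes "x \<in> kerQ_sq m n a"
  shows "x \<in> kerQ m n a \<and> pderiv_at a v x = 0"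
  using assms unfolding kerQ_sq_def
proof (induction rule: gen_ideal_induct)
  case zero
  then show ?case by (simp add: kerQ_def poly_ring_zero)
next
  case (add x y)
  then show ?case by (simp add: kerQ_add pderiv_at_add)
next
  case (generator c s)
  then obtain f g where "s = f * g" "f \<in> kerQ m n a" "g \<in> kerQ m n a" by blast
  with generator(1) show ?case
    by (auto simp: kerQ_def poly_ring_mult eval_mpoly_mult pderiv_at_mult)
qed

lemma taylor_remainder_mult:
  assumes f: "f \<in> poly_ring m n" "f - Const (eval_mpoly a f) - lin_part m n a f \<in> kerQ_sq m n a"
    and g: "g \<in> poly_ring m n" "g - Const (eval_mpoly a g) - lin_part m n a g \<in> kerQ_sq m n a"
  shows "f * g - Const (eval_mpoly a (f * g)) - lin_part m n a (f * g) \<in> kerQ_sq m n a"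
proof -
  define cf where "cf = Const (eval_mpoly a f)"
  define cg where "cg = Const (eval_mpoly a g)"
  define lf where "lf = lin_part m n a f"
  define lg where "lg = lin_part m n a g"
  define rf where "rf = f - cf - lf"
  define rg where "rg = g - cg - lg"
  have "f * g - Const (eval_mpoly a (f * g)) - lin_part m n a (f * g) = cf * rg + lf * lg + lf * rg + g * rf"
    unfolding eval_mpoly_mult Const_mult lin_part_mult
    by (simp add: cf_def cg_def lf_def lg_def rf_def rg_def algebra_simps)
  moreover have "cf * rg \<in> kerQ_sq m n a" "lf * rg \<in> kerQ_sq m n a" "g * rf \<in> kerQ_sq m n a"
    using f g lin_part_kerQ[of m n a f]
    by (auto simp: cf_def cg_def rf_def rg_def lf_def lg_def kerQ_def intro!: kerQ_sq_mult poly_ring_Const)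
  moreover have "lf * lg \<in> kerQ_sq m n a"
    by (simp add: lf_def lg_def kerQ_sq_product lin_part_kerQ)
  ultimately show ?thesis
    by (simp add: kerQ_sq_add)
qed

lemma taylor_remainder_kerQ_sq:
  assumes "f \<in> poly_ring m n"
  shows "f - Const (eval_mpoly a f) - lin_part m n a f \<in> kerQ_sq m n a"
proof -
  have "f \<in> poly_ring m n \<and> f - Const (eval_mpoly a f) - lin_part m n a f \<in> kerQ_sq m n a"
    using assms
  proof (induction rule: poly_ring_induct)
    case (Const c)
    then show ?case by (simp add: poly_ring_Const kerQ_sq_zero)
  next
    case (Var i j)
    then show ?case by (simp add: poly_ring_Var lin_part_Var kerQ_sq_zero)
  next
    case (add f g)
    have eq: "f + g - Const (eval_mpoly a (f + g)) - lin_part m n a (f + g) =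
      (f - Const (eval_mpoly a f) - lin_part m n a f) + (g - Const (eval_mpoly a g) - lin_part m n a g)"
      by (simp add: eval_mpoly_add Const_add lin_part_add algebra_simps)
    show ?case
      using add poly_ring_add kerQ_sq_add unfolding eq by blast
  next
    case (mult f g)
    then show ?case
      by (simp add: poly_ring_mult taylor_remainder_mult)
  qed
  then show ?thesis ..
qed

lemma kerQ_sq_if_pderiv_at_zero:
  assumes "f \<in> kerQ m n a" "\<And>i j. i < m \<Longrightarrow> j < n \<Longrightarrow> pderiv_at a (i, j) f = 0"
  shows "f \<in> kerQ_sq m n a"
proof -
  have "lin_part m n a f = 0"
    unfolding lin_part_def using assms(2) by (auto intro: sum.neutral)
  with taylor_remainder_kerQ_sq[of f m n a] assms(1) show ?thesis
    by (simp add: kerQ_def)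
qed

subsection \<open>The torsion submodule\<close>

lemma kerQ_sq_subset_denomN: "kerQ_sq m n a \<subseteq> denomN m n a"
  unfolding kerQ_sq_def denomN_def by (rule gen_ideal_mono) blast

lemma minor_in_denomN: "s \<in> minors m n m \<Longrightarrow> s \<in> denomN m n a"
proof -
  assume "s \<in> minors m n m"
  then have "s \<in> {f * g | f g. f \<in> kerQ m n a \<and> g \<in> kerQ m n a} \<union> minors m n m"
    by blast
  from gen_ideal_generator[OF this poly_ring_one] show ?thesis
    by (simp add: denomN_def)
qed

lemma denomN_add: "x \<in> denomN m n a \<Longrightarrow> y \<in> denomN m n a \<Longrightarrow> x + y \<in> denomN m n a"
  unfolding denomN_def by (rule gen_ideal_poly_ring_add)

lemma denomN_mult: "x \<in> denomN m n a \<Longrightarrow> r \<in> poly_ring m n \<Longrightarrow> r * x \<in> denomN m n a"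
  unfolding denomN_def by (rule gen_ideal_poly_ring_mult)

lemma denomN_Const_mult: "x \<in> denomN m n a \<Longrightarrow> Const c * x \<in> denomN m n a"
  by (simp add: denomN_mult poly_ring_Const)

lemma denomN_sum: "(\<And>x. x \<in> A \<Longrightarrow> g x \<in> denomN m n a) \<Longrightarrow> sum g A \<in> denomN m n a"
  unfolding denomN_def by (rule gen_ideal_poly_ring_sum)

lemma torsT_add:
  fixes a :: "nat \<Rightarrow> nat \<Rightarrow> 'a::idom"
  assumes "x \<in> torsT m n a" "y \<in> torsT m n a"
  shows "x + y \<in> torsT m n a"
proof -
  obtain c d where "c \<noteq> 0" "Const c * x \<in> denomN m n a" "d \<noteq> 0" "Const d * y \<in> denomN m n a"
    using assms by (auto simp: torsT_def)
  then have "Const (c * d) * (x + y) \<in> denomN m n a" "c * d \<noteq> 0"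
    using denomN_Const_mult[of "Const c * x" m n a d] denomN_Const_mult[of "Const d * y" m n a c]
    by (auto simp: Const_mult algebra_simps intro!: denomN_add)
  moreover have "x + y \<in> kerQ m n a"
    using assms by (simp add: torsT_def kerQ_add)
  ultimately show ?thesis
    unfolding torsT_def by blast
qed

lemma torsT_Const_mult:
  assumes "x \<in> torsT m n a"
  shows "Const c * x \<in> torsT m n a"
proof -
  obtain d where "d \<noteq> 0" "Const d * x \<in> denomN m n a"
    using assms by (auto simp: torsT_def)
  with assms show ?thesis
    using denomN_Const_mult[of "Const d * x" m n a c]
    by (auto simp: torsT_def kerQ_Const_mult mult.left_commute)
qed

lemma between_submod_diff:
  assumes "between_submod N T L" "x \<in> L" "y \<in> L"
  shows "x - y \<in> L"
proof -
  have "Const (- 1) * y \<in> L"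
    using assms by (simp add: between_submod_def)
  with assms show ?thesis
    unfolding between_submod_def by (metis Const_uminus Const_one diff_conv_add_uminus mult_minus1)
qed

subsection \<open>Quotients with coordinates in a power of the residue ring\<close>

text \<open>The hypotheses say that D induces an isomorphism of T/N onto \<open>(O/uf\<^sup>w O)\<^sup>r\<close>.\<close>
locale quotient_coordinates =
  fixes uf :: "'a::idom" and w r :: nat and N T :: "'a mpoly set" and D :: "'a mpoly \<Rightarrow> nat \<Rightarrow> 'a"
  assumes uniformiser: "is_dvr_uniformiser uf"
    and T_add: "x \<in> T \<Longrightarrow> y \<in> T \<Longrightarrow> x + y \<in> T"
    and T_Const_mult: "x \<in> T \<Longrightarrow> Const c * x \<in> T"
    and N_subset_T: "N \<subseteq> T"
    and D_add: "D (x + y) k = D x k + D y k"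
    and D_Const_mult: "D (Const c * x) k = c * D x k"
    and mem_N_iff: "x \<in> T \<Longrightarrow> x \<in> N \<longleftrightarrow> (\<forall>k<r. uf ^ w dvd D x k)"
    and D_onto: "\<exists>x\<in>T. \<forall>k<r. D x k = v k"
begin

lemma D_diff: "D (x - y) k = D x k - D y k"
  using D_add[of x "Const (- 1) * y"] D_Const_mult[of "- 1" y]
  by (simp add: Const_uminus)

lemma zero_mem_N: "0 \<in> N"
proof -
  obtain x where "x \<in> T"
    using D_onto[of "\<lambda>_. 0"] by blast
  then have "Const 0 * x \<in> T"
    by (rule T_Const_mult)
  then show ?thesis
    using D_Const_mult[of 0 x] mem_N_iff by simp
qed

lemma uf_power_Suc_not_dvd: "\<not> uf ^ Suc e dvd uf ^ e"
proof
  assume "uf ^ Suc e dvd uf ^ e"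
  then obtain c where "uf ^ e * 1 = uf ^ e * (uf * c)"
    by (auto simp: dvd_def mult.assoc)
  moreover have "uf ^ e \<noteq> 0"
    using uniformiser by (simp add: is_dvr_uniformiser_def)
  ultimately have "uf dvd 1"
    by (metis dvd_triv_left mult_left_cancel)
  then show False
    using uniformiser by (simp add: is_dvr_uniformiser_def)
qed

lemma unit_times_uf_power:
  assumes "c \<noteq> 0"
  obtains u u' e where "c = u * uf ^ e" "u' * u = 1"
proof -
  obtain u e where "u dvd 1" "c = u * uf ^ e"
    using uniformiser assms unfolding is_dvr_uniformiser_def by blast
  then show ?thesis
    using that by (metis dvdE mult.commute)
qed

text \<open>An echelon-form invariant of submodules, strictly increasing along chains.\<close>
definition lead_exps :: "'a mpoly set \<Rightarrow> nat \<Rightarrow> nat set" where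
  "lead_exps L k = {e. e < w \<and> (\<exists>x\<in>L. D x k = uf ^ e \<and> (\<forall>k'. k < k' \<longrightarrow> k' < r \<longrightarrow> D x k' = 0))}"

definition lead_count :: "'a mpoly set \<Rightarrow> nat" where
  "lead_count L = (\<Sum>k<r. card (lead_exps L k))"

lemma lead_exps_subset: "lead_exps L k \<subseteq> {..<w}"
  by (auto simp: lead_exps_def)

lemma finite_lead_exps: "finite (lead_exps L k)"
  using finite_subset[OF lead_exps_subset] by simp

lemma lead_exps_mono: "L \<subseteq> L' \<Longrightarrow> lead_exps L k \<subseteq> lead_exps L' k"
  unfolding lead_exps_def by blast

lemma lead_count_le: "lead_count L \<le> r * w"
proof -
  have "lead_count L \<le> (\<Sum>k<r. w)"
    unfolding lead_count_def
    by (rule sum_mono) (metis card_lessThan card_mono finite_lessThan lead_exps_subset)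
  then show ?thesis by simp
qed

lemma N_lift:
  assumes "\<forall>k<r. uf ^ w dvd v k"
  obtains y where "y \<in> N" "\<forall>k<r. D y k = v k"
proof -
  obtain y where y: "y \<in> T" "\<forall>k<r. D y k = v k"
    using D_onto[of v] by blast
  with assms have "y \<in> N"
    by (simp add: mem_N_iff[OF y(1)])
  with y(2) show ?thesis
    using that by blast
qed

text \<open>Coordinate s of x is cancelled by an element of N if it is divisible by \<open>uf\<^sup>w\<close>, and
  otherwise by a multiple of an element of L with the same leading exponent.\<close>
lemma reduce_coordinate:
  assumes L: "between_submod N T L" and L': "between_submod N T L'"
    and eq: "lead_exps L s = lead_exps L' s"
    and x: "x \<in> L'" and zero: "\<forall>k'. s < k' \<longrightarrow> k' < r \<longrightarrow> D x k' = 0"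
  obtains y where "y \<in> L" "\<forall>k'. s \<le> k' \<longrightarrow> k' < r \<longrightarrow> D (x - y) k' = 0"
proof (cases "uf ^ w dvd D x s")
  case True
  then have "\<forall>k<r. uf ^ w dvd (if k = s then D x s else 0)"
    by simp
  then obtain y where "y \<in> N" and y: "\<forall>k<r. D y k = (if k = s then D x s else 0)"
    by (rule N_lift)
  show ?thesis
  proof (rule that[of y])
    show "y \<in> L"
      using L \<open>y \<in> N\<close> by (auto simp: between_submod_def)
    show "\<forall>k'. s \<le> k' \<longrightarrow> k' < r \<longrightarrow> D (x - y) k' = 0"
      using zero y by (auto simp: D_diff le_less)
  qed
next
  case False
  then have "D x s \<noteq> 0"
    by auto
  then obtain u u' e where ue: "D x s = u * uf ^ e" "u' * u = 1"
    by (rule unit_times_uf_power)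
  have "e < w"
  proof (rule ccontr)
    assume "\<not> e < w"
    then have "uf ^ w dvd D x s"
      using ue(1) by (simp add: le_imp_power_dvd)
    with False show False ..
  qed
  have "Const u' * x \<in> L'"
    using L' x by (simp add: between_submod_def)
  moreover have "D (Const u' * x) s = uf ^ e"
    using ue by (simp add: D_Const_mult mult.assoc[symmetric])
  moreover have "\<forall>k'. s < k' \<longrightarrow> k' < r \<longrightarrow> D (Const u' * x) k' = 0"
    using zero by (simp add: D_Const_mult)
  ultimately have "e \<in> lead_exps L' s"
    unfolding lead_exps_def using \<open>e < w\<close> by (intro CollectI conjI bexI[of _ "Const u' * x"]) simp_all
  then have "e \<in> lead_exps L s"
    using eq by simp
  then obtain z where z: "z \<in> L" "D z s = uf ^ e" "\<forall>k'. s < k' \<longrightarrow> k' < r \<longrightarrow> D z k' = 0"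
    unfolding lead_exps_def by blast
  show ?thesis
  proof (rule that[of "Const u * z"])
    show "Const u * z \<in> L"
      using L z(1) by (simp add: between_submod_def)
    show "\<forall>k'. s \<le> k' \<longrightarrow> k' < r \<longrightarrow> D (x - Const u * z) k' = 0"
      using zero z(2,3) ue(1) by (auto simp: D_diff D_Const_mult le_less)
  qed
qed

lemma subset_if_lead_exps_eq:
  assumes L: "between_submod N T L" and L': "between_submod N T L'" and "L \<subseteq> L'"
    and eq: "\<forall>k<r. lead_exps L k = lead_exps L' k"
  shows "L' \<subseteq> L"
proof
  have key: "x \<in> L" if "x \<in> L'" "\<forall>k'. s \<le> k' \<longrightarrow> k' < r \<longrightarrow> D x k' = 0" "s \<le> r" for s x
    using that
  proof (induction s arbitrary: x)
    case 0
    then have "x \<in> N"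
      using L' mem_N_iff by (auto simp: between_submod_def)
    then show ?case
      using L by (auto simp: between_submod_def)
  next
    case (Suc s)
    then obtain y where y: "y \<in> L" "\<forall>k'. s \<le> k' \<longrightarrow> k' < r \<longrightarrow> D (x - y) k' = 0"
      using reduce_coordinate[OF L L', of s x] eq by (auto simp: Suc_le_eq)
    have "x - y \<in> L'"
      using between_submod_diff[OF L' Suc.prems(1)] y(1) \<open>L \<subseteq> L'\<close> by blast
    then have "x - y \<in> L"
      using Suc.IH y(2) Suc.prems(3) by simp
    with L y(1) show ?case
      unfolding between_submod_def by (metis diff_add_cancel)
  qed
  show "x \<in> L" if "x \<in> L'" for x
    using key[of x r] that by simp
qed

lemma lead_count_strict_mono:
  assumes L: "between_submod N T L" and L': "between_submod N T L'" and "L \<subset> L'"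
  shows "lead_count L < lead_count L'"
proof (rule ccontr)
  assume not_less: "\<not> lead_count L < lead_count L'"
  have mono: "lead_exps L k \<subseteq> lead_exps L' k" for k
    using \<open>L \<subset> L'\<close> lead_exps_mono by blast
  have "lead_exps L k = lead_exps L' k" if "k < r" for k
  proof (rule ccontr)
    assume "lead_exps L k \<noteq> lead_exps L' k"
    then have "card (lead_exps L k) < card (lead_exps L' k)"
      using mono by (intro psubset_card_mono finite_lead_exps) blast
    then have "lead_count L < lead_count L'"
      unfolding lead_count_def using that mono
      by (intro sum_strict_mono_ex1) (auto intro: card_mono finite_lead_exps)
    with not_less show False ..
  qed
  then have "L' \<subseteq> L"
    using subset_if_lead_exps_eq[OF L L'] \<open>L \<subset> L'\<close> by blast
  with \<open>L \<subset> L'\<close> show False by blast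
qed

lemma chain_length_le:
  assumes "\<forall>i\<le>k. between_submod N T (L i)" "\<forall>i<k. L i \<subset> L (Suc i)"
  shows "k \<le> r * w"
proof -
  have "i \<le> lead_count (L i)" if "i \<le> k" for i
    using that
  proof (induction i)
    case (Suc i)
    then have "lead_count (L i) < lead_count (L (Suc i))"
      using assms by (intro lead_count_strict_mono) auto
    with Suc show ?case by simp
  qed simp
  from this[of k] show ?thesis
    using lead_count_le[of "L k"] by simp
qed

text \<open>For \<open>s = q w + e\<close> with \<open>e < w\<close>, the coordinates below q are free, coordinate q is
  divisible by \<open>uf\<^sup>w\<^sup>-\<^sup>e\<close> and the later ones by \<open>uf\<^sup>w\<close>.\<close>
definition filtr :: "nat \<Rightarrow> 'a mpoly set" where
  "filtr s = {x \<in> T. \<forall>k<r. uf ^ (w - min w (s - k * w)) dvd D x k}"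

lemma filtr_0: "filtr 0 = N"
  using N_subset_T mem_N_iff by (auto simp: filtr_def)

lemma filtr_top: "filtr (r * w) = T"
proof -
  have "w \<le> r * w - k * w" if "k < r" for k
  proof -
    have "1 * w \<le> (r - k) * w"
      using that by (intro mult_le_mono1) simp
    then show ?thesis
      by (simp add: diff_mult_distrib)
  qed
  then show ?thesis
    by (auto simp: filtr_def min_absorb1)
qed

lemma filtr_between: "between_submod N T (filtr s)"
  unfolding between_submod_def
proof (intro conjI ballI allI)
  show "N \<subseteq> filtr s"
    using N_subset_T mem_N_iff
    by (auto simp: filtr_def intro: dvd_trans[OF le_imp_power_dvd[OF diff_le_self]])
qed (auto simp: filtr_def T_add T_Const_mult D_add D_Const_mult)

lemma filtr_mono: "filtr s \<subseteq> filtr (Suc s)"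
proof -
  have "uf ^ (w - min w (Suc s - k * w)) dvd uf ^ (w - min w (s - k * w))" for k
    by (rule le_imp_power_dvd) (intro diff_le_mono2 min.mono; simp)
  then show ?thesis
    by (auto simp: filtr_def intro: dvd_trans)
qed

lemma filtr_strict_mono:
  assumes s: "s < r * w"
  shows "filtr s \<subset> filtr (Suc s)"
proof -
  have "0 < w"
    using s by (cases w) auto
  define q e where "q = s div w" and "e = s mod w"
  have s_eq: "s = q * w + e" and "e < w"
    using \<open>0 < w\<close> by (simp_all add: q_def e_def)
  have "q < r"
    using s by (simp add: q_def less_mult_imp_div_less)
  obtain x where x: "x \<in> T" "\<forall>k<r. D x k = (if k = q then uf ^ (w - Suc e) else 0)"
    using D_onto[of "\<lambda>k. if k = q then uf ^ (w - Suc e) else 0"] by blast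
  have "w - min w (Suc s - q * w) = w - Suc e"
    using s_eq \<open>e < w\<close> by simp
  then have "x \<in> filtr (Suc s)"
    using x by (auto simp: filtr_def)
  moreover have "x \<notin> filtr s"
  proof
    assume "x \<in> filtr s"
    then have "uf ^ (w - min w (s - q * w)) dvd D x q"
      using \<open>q < r\<close> by (simp add: filtr_def)
    moreover have "w - min w (s - q * w) = Suc (w - Suc e)"
      using s_eq \<open>e < w\<close> by simp
    moreover have "D x q = uf ^ (w - Suc e)"
      using x \<open>q < r\<close> by simp
    ultimately have "uf ^ Suc (w - Suc e) dvd uf ^ (w - Suc e)"
      by metis
    then show False
      using uf_power_Suc_not_dvd by blast
  qed
  ultimately show ?thesis
    using filtr_mono by blast
qed

theorem quot_length_eq: "quot_length N T = enat (r * w)"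
proof -
  define A where "A = {enat k | k. \<exists>L. (\<forall>i\<le>k. between_submod N T (L i)) \<and>
      L 0 = N \<and> L k = T \<and> (\<forall>i<k. L i \<subset> L (Suc i))}"
  have "z \<le> enat (r * w)" if "z \<in> A" for z
  proof -
    obtain k L where "z = enat k" "\<forall>i\<le>k. between_submod N T (L i)" "\<forall>i<k. L i \<subset> L (Suc i)"
      using \<open>z \<in> A\<close> unfolding A_def by blast
    then show ?thesis
      using chain_length_le by simp
  qed
  moreover have "enat (r * w) \<in> A"
  proof -
    have "\<exists>L. (\<forall>i\<le>r * w. between_submod N T (L i)) \<and> L 0 = N \<and> L (r * w) = T \<and>
        (\<forall>i<r * w. L i \<subset> L (Suc i))"
      using filtr_between filtr_0 filtr_top filtr_strict_mono by (intro exI[of _ filtr]) simp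
    then show ?thesis
      unfolding A_def by blast
  qed
  ultimately have "Sup A = enat (r * w)"
    by (intro antisym Sup_least Sup_upper)
  then show ?thesis
    by (simp add: quot_length_def A_def)
qed

end

lemma permutes_lessThan_less: "p permutes {..<k} \<Longrightarrow> i < k \<Longrightarrow> p i < k"
  using permutes_in_image[of p "{..<k}" i] by simp

lemma leibniz_sum_identical_rows:
  fixes C :: "nat \<Rightarrow> nat \<Rightarrow> 'a::comm_ring_1"
  assumes "r < k" "s < k" "r \<noteq> s" "\<And>j. C r j = C s j"
  shows "(\<Sum>p\<in>{p. p permutes {..<k}}. of_int (sign p) * (\<Prod>i<k. C i (p i))) = 0"
proof -
  define A where "A = mat k k (\<lambda>(i, j). C i j)"
  have A: "A \<in> carrier_mat k k"
    by (simp add: A_def)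
  have "(\<Sum>p\<in>{p. p permutes {..<k}}. of_int (sign p) * (\<Prod>i<k. C i (p i))) = det A"
    unfolding det_def'[OF A] atLeast0LessThan
    by (intro sum.cong refl arg_cong2[where f = "(*)"] prod.cong)
       (auto simp: A_def permutes_lessThan_less)
  also have "det A = 0"
    by (rule det_identical_rows[OF A assms(3,1,2)]) (use assms in \<open>simp add: A_def\<close>)
  finally show ?thesis .
qed

lemma strict_mono_on_lessThan_add_le:
  fixes f :: "nat \<Rightarrow> nat"
  assumes "strict_mono_on {..<k} f" "i \<le> j" "j < k"
  shows "f i + (j - i) \<le> f j"
  using assms(2,3)
proof (induction j)
  case (Suc j)
  show ?case
  proof (cases "i = Suc j")
    case False
    with Suc have "f i + (j - i) \<le> f j" "f j < f (Suc j)"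
      using assms(1) by (auto simp: strict_mono_on_def)
    with False Suc.prems show ?thesis by linarith
  qed simp
qed simp

lemma strict_mono_on_lessThan_self_map:
  fixes f :: "nat \<Rightarrow> nat"
  assumes "strict_mono_on {..<k} f" "f ` {..<k} \<subseteq> {..<k}" "i < k"
  shows "f i = i"
proof -
  have "f 0 + (i - 0) \<le> f i" "f i + (k - 1 - i) \<le> f (k - 1)"
    using strict_mono_on_lessThan_add_le[OF assms(1), of 0 i]
      strict_mono_on_lessThan_add_le[OF assms(1), of i "k - 1"] assms(3) by simp_all
  moreover have "k - 1 \<in> {..<k}"
    using assms(3) by simp
  then have "f (k - 1) < k"
    using assms(2) by blast
  ultimately show ?thesis
    using assms(3) by linarith
qed

lemma prod_if_zero:
  fixes c :: "'b \<Rightarrow> 'a::comm_semiring_1"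
  assumes "finite A"
  shows "(\<Prod>i\<in>A. if P i then c i else 0) = (if \<forall>i\<in>A. P i then (\<Prod>i\<in>A. c i) else 0)"
  using assms by (induction A rule: finite_induct) auto

lemma sum_of_bool_conj_eq:
  "finite S \<Longrightarrow> (\<Sum>j\<in>S. of_bool (P \<and> c = j)) = (of_bool (P \<and> c \<in> S) :: 'a::semiring_1)"
  by (cases P) (simp_all add: sum.delta')

subsection \<open>The point amat\<close>

locale amat_setting =
  fixes uf :: "'a::idom" and m n :: nat and as :: "nat \<Rightarrow> nat"
  assumes uniformiser: "is_dvr_uniformiser uf" and two_le_m: "2 \<le> m" and m_le_n: "m \<le> n"
begin

abbreviation "t \<equiv> m - 1"
abbreviation "a \<equiv> amat uf m as"
abbreviation "\<Delta> \<equiv> uf ^ (\<Sum>i<m - 1. as i)"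

lemma t_less_n: "t < n"
  using two_le_m m_le_n by simp

lemma less_m_iff: "i < m \<longleftrightarrow> i < t \<or> i = t"
  using two_le_m by auto

lemma prod_lessThan_m: "(\<Prod>i<m. f i) = (\<Prod>i<t. f i) * f t"
proof -
  have "{..<m} = insert t {..<t}"
    using two_le_m by auto
  then show ?thesis
    by (simp add: mult.commute)
qed

lemma Delta_nonzero: "\<Delta> \<noteq> 0"
  using uniformiser by (simp add: is_dvr_uniformiser_def)

lemma amat_last_row [simp]: "a t j = 0" "amat uf m as (m - Suc 0) j = 0"
  by (simp_all add: amat_def)

lemma prod_amat: "(\<Prod>i<t. a i (c i)) = (if \<forall>i<t. c i mod t = i then \<Delta> else 0)"
proof -
  have "(\<Prod>i<t. a i (c i)) = (\<Prod>i<t. if c i mod t = i then uf ^ as i else 0)"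
    by (rule prod.cong) (auto simp: amat_def)
  also have "\<dots> = (if \<forall>i<t. c i mod t = i then (\<Prod>i<t. uf ^ as i) else 0)"
    by (subst prod_if_zero) auto
  also have "(\<Prod>i<t. uf ^ as i) = \<Delta>"
    by (simp add: power_sum)
  finally show ?thesis .
qed

text \<open>Column j of a is \<open>uf ^ as (j mod t)\<close> times the unit vector \<open>e (j mod t)\<close> and its last
  row vanishes, so this is the kernel of a on vectors of length n.\<close>
definition in_kernel :: "(nat \<Rightarrow> 'a) \<Rightarrow> bool" where
  "in_kernel u \<longleftrightarrow> (\<forall>r<t. (\<Sum>j\<in>{j. j < n \<and> j mod t = r}. u j) = 0)"

text \<open>The kernel vector whose coordinate t + k is v k; the kernel is free on these coordinates.\<close>
definition kernel_ext :: "(nat \<Rightarrow> 'a) \<Rightarrow> nat \<Rightarrow> 'a" where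
  "kernel_ext v j = (if t \<le> j then v (j - t)
      else - (\<Sum>j'\<in>{j'. t \<le> j' \<and> j' < n \<and> j' mod t = j}. v (j' - t)))"

lemma in_kernel_sum: "(\<And>x. x \<in> A \<Longrightarrow> in_kernel (f x)) \<Longrightarrow> in_kernel (\<lambda>j. \<Sum>x\<in>A. f x j)"
  unfolding in_kernel_def by (subst sum.swap) simp

lemma in_kernel_scale: "in_kernel u \<Longrightarrow> in_kernel (\<lambda>j. c * u j)"
  unfolding in_kernel_def by (simp flip: sum_distrib_left)

lemma in_kernel_add: "in_kernel u \<Longrightarrow> in_kernel v \<Longrightarrow> in_kernel (\<lambda>j. u j + v j)"
  unfolding in_kernel_def by (simp add: sum.distrib)

lemma in_kernel_zero: "in_kernel (\<lambda>j. 0)"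
  unfolding in_kernel_def by simp

lemma in_kernel_cancel: "c \<noteq> 0 \<Longrightarrow> in_kernel (\<lambda>j. c * u j) \<Longrightarrow> in_kernel u"
  unfolding in_kernel_def by (simp flip: sum_distrib_left)

lemma sum_residue_class:
  assumes "r < t"
  shows "(\<Sum>j\<in>{j. j < n \<and> j mod t = r}. u j) = u r + (\<Sum>j\<in>{j. t \<le> j \<and> j < n \<and> j mod t = r}. u j)"
proof -
  have "{j. j < n \<and> j mod t = r} = insert r {j. t \<le> j \<and> j < n \<and> j mod t = r}"
    using assms t_less_n by (auto simp: not_le) (metis mod_less not_le)
  moreover have "finite {j. t \<le> j \<and> j < n \<and> j mod t = r}"
    by (rule finite_subset[of _ "{..<n}"]) auto
  ultimately show ?thesis
    using assms by simp
qed

lemma in_kernel_iff_low: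
  "in_kernel u \<longleftrightarrow> (\<forall>r<t. u r = - (\<Sum>j\<in>{j. t \<le> j \<and> j < n \<and> j mod t = r}. u j))"
proof -
  have "(\<Sum>j\<in>{j. j < n \<and> j mod t = r}. u j) = 0 \<longleftrightarrow>
        u r = - (\<Sum>j\<in>{j. t \<le> j \<and> j < n \<and> j mod t = r}. u j)" if "r < t" for r
    using sum_residue_class[OF that, of u] by (simp add: eq_neg_iff_add_eq_0)
  then show ?thesis
    unfolding in_kernel_def by blast
qed

lemma in_kernel_ext: "in_kernel (kernel_ext v)"
  unfolding in_kernel_iff_low
  by (auto simp: kernel_ext_def intro!: sum.cong)

lemma in_kernel_eqI:
  assumes "in_kernel u" "in_kernel v" "\<And>j. t \<le> j \<Longrightarrow> j < n \<Longrightarrow> u j = v j" "j < n"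
  shows "u j = v j"
proof (cases "t \<le> j")
  case False
  with assms show ?thesis
    unfolding in_kernel_iff_low by (auto intro!: arg_cong[where f = uminus] sum.cong)
qed (use assms in simp)

definition cofactor :: "(nat \<Rightarrow> nat) \<Rightarrow> nat \<Rightarrow> 'a" where
  "cofactor cs j = (\<Sum>p\<in>{p. p permutes {..<m}}. of_int (sign p) *
      of_bool ((\<forall>l<t. cs (p l) mod t = l) \<and> cs (p t) = j))"

lemma minors_rows_id:
  assumes "s \<in> minors m n m"
  obtains cs where "s = minor m (\<lambda>i. i) cs" "cs ` {..<m} \<subseteq> {..<n}"
proof -
  obtain rs cs where s: "s = minor m rs cs" "strict_mono_on {..<m} rs" "rs ` {..<m} \<subseteq> {..<m}"
    "cs ` {..<m} \<subseteq> {..<n}"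
    using assms unfolding minors_def by blast
  have "minor m rs cs = minor m (\<lambda>i. i) cs"
    unfolding minor_def using strict_mono_on_lessThan_self_map[OF s(2,3)]
    by (intro sum.cong refl arg_cong2[where f = "(*)"] prod.cong) auto
  with s that show ?thesis by simp
qed

lemma minor_poly_ring:
  assumes "cs ` {..<m} \<subseteq> {..<n}"
  shows "minor m (\<lambda>i. i) cs \<in> poly_ring m n"
  unfolding minor_def
proof (intro poly_ring_sum poly_ring_mult poly_ring_of_int poly_ring_prod poly_ring_Var)
  fix p i assume "p \<in> {p. p permutes {..<m}}" "i \<in> {..<m}"
  with assms show "cs (p i) < n"
    using permutes_lessThan_less by blast
qed auto

lemma eval_minor: "eval_mpoly a (minor m (\<lambda>i. i) cs) = 0"
  unfolding minor_def by (simp add: eval_mpoly_sum eval_mpoly_mult eval_mpoly_prod prod_lessThan_m)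

lemma pderiv_at_prod_Var:
  "pderiv_at a v (\<Prod>i<m. Var i (c i)) =
     (if \<forall>i<t. c i mod t = i then \<Delta> else 0) * of_bool (v = (t, c t))"
proof -
  have "pderiv_at a v (\<Prod>i<m. Var i (c i)) =
      eval_mpoly a (\<Prod>i<t. Var i (c i)) * pderiv_at a v (Var t (c t))
      + eval_mpoly a (Var t (c t)) * pderiv_at a v (\<Prod>i<t. Var i (c i))"
    unfolding prod_lessThan_m by (rule pderiv_at_mult)
  also have "\<dots> = (\<Prod>i<t. a i (c i)) * of_bool (v = (t, c t))"
    by (simp add: eval_mpoly_prod pderiv_at_Var eq_commute)
  finally show ?thesis
    by (simp only: prod_amat)
qed

lemma pderiv_at_minor:
  "pderiv_at a (i, j) (minor m (\<lambda>i. i) cs) = (if i = t then \<Delta> * cofactor cs j else 0)"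
  unfolding minor_def cofactor_def
  by (cases "i = t") (auto simp: pderiv_at_sum pderiv_at_of_int_mult pderiv_at_prod_Var
      sum_distrib_left intro!: sum.cong)

text \<open>The row-t cofactors are orthogonal to the rows of a above t, since they compute
  determinants with a repeated row.\<close>
lemma cofactor_in_kernel:
  assumes cs: "cs ` {..<m} \<subseteq> {..<n}"
  shows "in_kernel (cofactor cs)"
  unfolding in_kernel_def
proof (intro allI impI)
  fix r assume r: "r < t"
  define S where "S = {j. j < n \<and> j mod t = r}"
  define C :: "nat \<Rightarrow> nat \<Rightarrow> 'a" where "C i k = of_bool (cs k mod t = (if i < t then i else r))" for i k
  have finite_S: "finite S"
    by (simp add: S_def)
  have row_sum: "(\<Sum>j\<in>S. of_bool ((\<forall>l<t. cs (p l) mod t = l) \<and> cs (p t) = j)) = (\<Prod>i<m. C i (p i))"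
    if p: "p permutes {..<m}" for p
  proof -
    have "cs (p t) < n"
      using cs two_le_m permutes_lessThan_less[OF p, of t] by auto
    then have "(\<Sum>j\<in>S. of_bool ((\<forall>l<t. cs (p l) mod t = l) \<and> cs (p t) = j)) =
        (of_bool ((\<forall>l<t. cs (p l) mod t = l) \<and> cs (p t) mod t = r) :: 'a)"
      unfolding sum_of_bool_conj_eq[OF finite_S] by (simp add: S_def)
    also have "\<dots> = (\<Prod>i<t. C i (p i)) * C t (p t)"
      by (simp add: C_def of_bool_def prod_if_zero)
    finally show ?thesis
      by (simp only: prod_lessThan_m)
  qed
  have "(\<Sum>j\<in>S. cofactor cs j) =
      (\<Sum>p\<in>{p. p permutes {..<m}}. of_int (sign p) *
         (\<Sum>j\<in>S. of_bool ((\<forall>l<t. cs (p l) mod t = l) \<and> cs (p t) = j)))"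
    unfolding cofactor_def by (subst sum.swap) (simp add: sum_distrib_left)
  also have "\<dots> = (\<Sum>p\<in>{p. p permutes {..<m}}. of_int (sign p) * (\<Prod>i<m. C i (p i)))"
    by (intro sum.cong refl) (simp only: mem_Collect_eq row_sum)
  also have "\<dots> = 0"
    by (rule leibniz_sum_identical_rows[of r m t]) (use r two_le_m in \<open>auto simp: C_def\<close>)
  finally show "(\<Sum>j\<in>{j. j < n \<and> j mod t = r}. cofactor cs j) = 0"
    by (simp add: S_def)
qed

definition cols_with :: "nat \<Rightarrow> nat \<Rightarrow> nat" where
  "cols_with j k = (if k < t then k else j)"

lemma cols_with_subset: "t \<le> j \<Longrightarrow> j < n \<Longrightarrow> cols_with j ` {..<m} \<subseteq> {..<n}"
  using t_less_n by (auto simp: cols_with_def)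

lemma minor_cols_with_minors:
  assumes "t \<le> j" "j < n"
  shows "minor m (\<lambda>i. i) (cols_with j) \<in> minors m n m"
  unfolding minors_def using assms cols_with_subset[OF assms]
  by (intro CollectI exI[of _ "\<lambda>i. i"] exI[of _ "cols_with j"])
     (auto simp: strict_mono_on_def cols_with_def)

lemma cols_with_perm_eq_id:
  assumes p: "p permutes {..<m}" and "t \<le> cols_with j (p t)"
    and diag: "\<forall>l<t. cols_with j (p l) mod t = l"
  shows "p = id"
proof -
  have "p t = t"
  proof (rule ccontr)
    assume "p t \<noteq> t"
    then have "p t < t"
      using permutes_lessThan_less[OF p, of t] two_le_m less_m_iff by auto
    with assms(2) show False
      by (simp add: cols_with_def)
  qed
  have "p l = l" if "l < m" for l
  proof (cases "l = t")
    case False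
    have "p l \<noteq> p t"
      using False injD[OF permutes_inj[OF p]] by blast
    with False that have "l < t" "p l \<noteq> t"
      using less_m_iff \<open>p t = t\<close> by auto
    then have "p l < t"
      using permutes_lessThan_less[OF p that] less_m_iff by blast
    moreover have "cols_with j (p l) mod t = l"
      using diag \<open>l < t\<close> by blast
    ultimately show ?thesis
      by (simp add: cols_with_def)
  qed (use \<open>p t = t\<close> in simp)
  with p show "p = id"
    by (metis id_apply lessThan_iff permutes_def ext)
qed

lemma cofactor_cols_with:
  assumes "t \<le> j" "t \<le> j'"
  shows "cofactor (cols_with j) j' = of_bool (j' = j)"
proof -
  have "((\<forall>l<t. cols_with j (p l) mod t = l) \<and> cols_with j (p t) = j') \<longleftrightarrow> p = id \<and> j' = j"
    if "p permutes {..<m}" for p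
    using cols_with_perm_eq_id[OF that] assms by (auto simp: cols_with_def)
  then have "cofactor (cols_with j) j' = (\<Sum>p\<in>{p. p permutes {..<m}}. of_bool (p = id \<and> j' = j))"
    unfolding cofactor_def by (intro sum.cong refl) auto
  also have "\<dots> = of_bool (j' = j)"
    by (simp add: sum_of_bool_conj_eq[of _ "j' = j" id, simplified eq_commute[of id]]
        permutes_id finite_permutations conj_commute)
  finally show ?thesis .
qed

lemma in_kernel_cong: "(\<And>j. j < n \<Longrightarrow> u j = v j) \<Longrightarrow> in_kernel u \<longleftrightarrow> in_kernel v"
  unfolding in_kernel_def by (intro all_cong1 imp_cong refl arg_cong2[where f = "(=)"] sum.cong) auto

lemma denomN_pderiv_at:
  assumes "x \<in> denomN m n a"
  shows "x \<in> kerQ m n a \<and> (\<forall>i j. i \<noteq> t \<longrightarrow> pderiv_at a (i, j) x = 0) \<and>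
         (\<exists>u. in_kernel u \<and> (\<forall>j. pderiv_at a (t, j) x = \<Delta> * u j))"
  using assms unfolding denomN_def
proof (induction rule: gen_ideal_induct)
  case zero
  then show ?case
    using in_kernel_zero by (auto simp: kerQ_def poly_ring_zero)
next
  case (add x y)
  then obtain u v where "in_kernel u" "\<forall>j. pderiv_at a (t, j) x = \<Delta> * u j"
    "in_kernel v" "\<forall>j. pderiv_at a (t, j) y = \<Delta> * v j"
    by blast
  then have "in_kernel (\<lambda>j. u j + v j) \<and> (\<forall>j. pderiv_at a (t, j) (x + y) = \<Delta> * (u j + v j))"
    by (simp add: in_kernel_add pderiv_at_add distrib_left)
  with add show ?case
    by (auto simp: kerQ_add pderiv_at_add)
next
  case (generator c s)
  show ?case
  proof (cases "s \<in> minors m n m")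
    case True
    then obtain cs where cs: "s = minor m (\<lambda>i. i) cs" "cs ` {..<m} \<subseteq> {..<n}"
      by (rule minors_rows_id)
    have "c * s \<in> kerQ m n a"
      using generator(1) cs by (simp add: kerQ_def poly_ring_mult minor_poly_ring eval_mpoly_mult eval_minor)
    moreover have "in_kernel (\<lambda>j. eval_mpoly a c * cofactor cs j)"
      by (rule in_kernel_scale[OF cofactor_in_kernel[OF cs(2)]])
    ultimately show ?thesis
      using cs by (auto simp: pderiv_at_mult eval_minor pderiv_at_minor)
  next
    case False
    with generator(2) obtain f g where "s = f * g" "f \<in> kerQ m n a" "g \<in> kerQ m n a"
      by blast
    then have "c * s \<in> kerQ_sq m n a"
      using generator(1) by (simp add: kerQ_sq_mult kerQ_sq_product)
    then show ?thesis
      using kerQ_sq_pderiv_at in_kernel_zero by fastforce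
  qed
qed

lemma denomN_subset_torsT: "denomN m n a \<subseteq> torsT m n a"
proof
  fix x assume x: "x \<in> denomN m n a"
  then have "x \<in> kerQ m n a"
    using denomN_pderiv_at by blast
  with x show "x \<in> torsT m n a"
    unfolding torsT_def by (intro CollectI conjI exI[of _ 1]) simp_all
qed

definition kernel_lift :: "(nat \<Rightarrow> 'a) \<Rightarrow> 'a mpoly" where
  "kernel_lift u = (\<Sum>j\<in>{t..<n}. Const (u j) * minor m (\<lambda>i. i) (cols_with j))"

lemma kernel_lift_denomN: "kernel_lift u \<in> denomN m n a"
  unfolding kernel_lift_def
  by (intro denomN_sum denomN_Const_mult minor_in_denomN minor_cols_with_minors) auto

lemma pderiv_at_kernel_lift:
  assumes u: "in_kernel u" and "j < n"
  shows "pderiv_at a (i, j) (kernel_lift u) = (if i = t then \<Delta> * u j else 0)"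
proof -
  define v where "v j' = (\<Sum>j\<in>{t..<n}. u j * cofactor (cols_with j) j')" for j'
  have "pderiv_at a (i, j) (kernel_lift u) = (if i = t then \<Delta> * v j else 0)"
    unfolding kernel_lift_def v_def
    by (simp add: pderiv_at_sum pderiv_at_Const_mult pderiv_at_minor sum_distrib_left mult.left_commute)
  moreover have "v j = u j"
  proof (rule in_kernel_eqI[OF _ u _ \<open>j < n\<close>])
    show "in_kernel v"
      unfolding v_def by (intro in_kernel_sum in_kernel_scale cofactor_in_kernel cols_with_subset) auto
    show "v j' = u j'" if "t \<le> j'" "j' < n" for j'
    proof -
      have "v j' = (\<Sum>j\<in>{t..<n}. if j = j' then u j else 0)"
        unfolding v_def using that by (intro sum.cong refl) (auto simp: cofactor_cols_with)
      also have "\<dots> = u j'"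
        using that by (simp add: sum.delta)
      finally show ?thesis .
    qed
  qed
  ultimately show ?thesis by simp
qed

lemma mem_denomN_if_pderiv_at:
  assumes x: "x \<in> kerQ m n a" and low: "\<And>i j. i < t \<Longrightarrow> j < n \<Longrightarrow> pderiv_at a (i, j) x = 0"
    and u: "in_kernel u" and top: "\<And>j. j < n \<Longrightarrow> pderiv_at a (t, j) x = \<Delta> * u j"
  shows "x \<in> denomN m n a"
proof -
  have "x - kernel_lift u \<in> kerQ_sq m n a"
  proof (rule kerQ_sq_if_pderiv_at_zero)
    show "x - kernel_lift u \<in> kerQ m n a"
      using x conjunct1[OF denomN_pderiv_at[OF kernel_lift_denomN]] by (rule kerQ_diff)
    show "pderiv_at a (i, j) (x - kernel_lift u) = 0" if "i < m" "j < n" for i j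
      using that low top less_m_iff by (auto simp: pderiv_at_diff pderiv_at_kernel_lift[OF u])
  qed
  then have "x - kernel_lift u + kernel_lift u \<in> denomN m n a"
    using kerQ_sq_subset_denomN by (blast intro: denomN_add kernel_lift_denomN)
  then show ?thesis by simp
qed

lemma torsT_iff:
  "x \<in> torsT m n a \<longleftrightarrow>
     x \<in> kerQ m n a \<and> (\<forall>i<t. \<forall>j<n. pderiv_at a (i, j) x = 0) \<and> in_kernel (\<lambda>j. pderiv_at a (t, j) x)"
proof
  assume "x \<in> torsT m n a"
  then obtain c where x: "x \<in> kerQ m n a" "c \<noteq> 0" "Const c * x \<in> denomN m n a"
    by (auto simp: torsT_def)
  from denomN_pderiv_at[OF x(3)] obtain u where
    low: "\<forall>i j. i \<noteq> t \<longrightarrow> c * pderiv_at a (i, j) x = 0" and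
    u: "in_kernel u" "\<forall>j. c * pderiv_at a (t, j) x = \<Delta> * u j"
    by (auto simp: pderiv_at_Const_mult)
  have "in_kernel (\<lambda>j. c * pderiv_at a (t, j) x)"
    using in_kernel_scale[OF u(1), of \<Delta>] u(2) by simp
  then have "in_kernel (\<lambda>j. pderiv_at a (t, j) x)"
    by (rule in_kernel_cancel[OF x(2)])
  with x low show "x \<in> kerQ m n a \<and> (\<forall>i<t. \<forall>j<n. pderiv_at a (i, j) x = 0) \<and>
      in_kernel (\<lambda>j. pderiv_at a (t, j) x)"
    by auto
next
  assume H: "x \<in> kerQ m n a \<and> (\<forall>i<t. \<forall>j<n. pderiv_at a (i, j) x = 0) \<and>
      in_kernel (\<lambda>j. pderiv_at a (t, j) x)"
  have "Const \<Delta> * x \<in> denomN m n a"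
    by (rule mem_denomN_if_pderiv_at[of _ "\<lambda>j. pderiv_at a (t, j) x"])
       (use H in \<open>auto simp: kerQ_Const_mult pderiv_at_Const_mult\<close>)
  with H Delta_nonzero show "x \<in> torsT m n a"
    unfolding torsT_def by blast
qed

definition row_form :: "(nat \<Rightarrow> 'a) \<Rightarrow> 'a mpoly" where
  "row_form u = (\<Sum>j<n. Const (u j) * Var t j)"

lemma row_form_kerQ: "row_form u \<in> kerQ m n a"
  unfolding row_form_def kerQ_def using two_le_m
  by (auto intro!: poly_ring_sum poly_ring_mult poly_ring_Const poly_ring_Var
      simp: eval_mpoly_sum eval_mpoly_mult)

lemma pderiv_at_row_form: "j < n \<Longrightarrow> pderiv_at a (i, j) (row_form u) = (if i = t then u j else 0)"
  unfolding row_form_def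
  by (simp add: pderiv_at_sum pderiv_at_Const_mult pderiv_at_Var of_bool_def if_distrib sum.delta
      cong: if_cong)

lemma denomN_iff_dvd:
  assumes x: "x \<in> torsT m n a"
  shows "x \<in> denomN m n a \<longleftrightarrow> (\<forall>k<n - t. \<Delta> dvd pderiv_at a (t, t + k) x)"
proof
  assume "x \<in> denomN m n a"
  then obtain u where "\<forall>j. pderiv_at a (t, j) x = \<Delta> * u j"
    using denomN_pderiv_at by blast
  then show "\<forall>k<n - t. \<Delta> dvd pderiv_at a (t, t + k) x"
    by simp
next
  assume "\<forall>k<n - t. \<Delta> dvd pderiv_at a (t, t + k) x"
  then have "\<forall>k. \<exists>c. k < n - t \<longrightarrow> pderiv_at a (t, t + k) x = \<Delta> * c"
    by (auto simp: dvd_def)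
  from choice[OF this] obtain h where h: "\<And>k. k < n - t \<Longrightarrow> pderiv_at a (t, t + k) x = \<Delta> * h k"
    by blast
  have low: "\<forall>i<t. \<forall>j<n. pderiv_at a (i, j) x = 0" and K: "in_kernel (\<lambda>j. pderiv_at a (t, j) x)"
    using x by (simp_all add: torsT_iff)
  have "pderiv_at a (t, j) x = \<Delta> * kernel_ext h j" if "j < n" for j
  proof (rule in_kernel_eqI[OF K in_kernel_scale[OF in_kernel_ext] _ that])
    show "pderiv_at a (t, j') x = \<Delta> * kernel_ext h j'" if "t \<le> j'" "j' < n" for j'
      using that h[of "j' - t"] by (simp add: kernel_ext_def)
  qed
  with x low show "x \<in> denomN m n a"
    by (intro mem_denomN_if_pderiv_at[OF _ _ in_kernel_ext]) (auto simp: torsT_iff)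
qed

lemma pderiv_at_onto: "\<exists>x\<in>torsT m n a. \<forall>k<n - t. pderiv_at a (t, t + k) x = v k"
proof (intro bexI allI impI)
  have "in_kernel (\<lambda>j. pderiv_at a (t, j) (row_form (kernel_ext v)))"
    using in_kernel_ext by (subst in_kernel_cong) (simp_all add: pderiv_at_row_form)
  then show "row_form (kernel_ext v) \<in> torsT m n a"
    unfolding torsT_iff using row_form_kerQ by (simp add: pderiv_at_row_form)
  show "pderiv_at a (t, t + k) (row_form (kernel_ext v)) = v k" if "k < n - t" for k
    using that by (simp add: pderiv_at_row_form kernel_ext_def)
qed

sublocale quotient_coordinates uf "\<Sum>i<m - 1. as i" "n - (m - 1)" "denomN m n a" "torsT m n a"
  "\<lambda>x k. pderiv_at a (m - 1, m - 1 + k) x"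
proof
  show "is_dvr_uniformiser uf"
    by (rule uniformiser)
  show "\<exists>x\<in>torsT m n a. \<forall>k<n - (m - 1). pderiv_at a (m - 1, m - 1 + k) x = v k" for v
    by (rule pderiv_at_onto)
qed (simp_all add: torsT_add torsT_Const_mult denomN_subset_torsT pderiv_at_add
    pderiv_at_Const_mult denomN_iff_dvd)

end

theorem lemma5p9:
  fixes uf :: "'a::idom" and m n :: nat and as :: "nat \<Rightarrow> nat"
  assumes "is_dvr_uniformiser uf"
    and "2 \<le> m" and "m \<le> n"
    and "\<And>i j. i \<le> j \<Longrightarrow> j < m - 1 \<Longrightarrow> as i \<le> as j"
  shows "quot_length (denomN m n (amat uf m as)) (torsT m n (amat uf m as))
           = enat ((n - (m - 1)) * (\<Sum>i<m - 1. as i))"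
proof -
  interpret amat_setting uf m n as
    using assms(1-3) by unfold_locales
  show ?thesis
    by (rule quot_length_eq)
qed

end
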